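(* The Petersen graph is not B-factorizable; moreover, there is $v\in\overline{\mathbf N}(PM(V))\cap\mathrm{problem}(V)$ with $E(v)$ equal to the Petersen graph and $2v\in\mathbf N(PM(V))$, which is an additional generator.
   Context: Let $V$ be a finite set with $|V|$ even (here $|V|=10$, the vertex set of the Petersen graph). $K=\binom{V}{2}$ is the set of 2-element subsets of $V$. An equal partition of $V$ is an unordered pair $\{H,A\}$ of disjoint subsets with $H\cup A=V$ and $|H|=|A|=|V|/2$; $C=C(V)$ is the set of equal partitions. For $c=\{H,A\}\in C$, $B_c$ is the complete bipartite graph with parts $H$ and $A$. Vectors live in $\mathbb N^{K\cup C}$ with $\mathbb N=\{0,1,2,\dots\}$; $v|_K$ denotes the restriction to coordinates in $K$. For $E\subseteq K$, $\chi_E\in\{0,1\}^K$ is its indicator vector; $\chi_K$ is the all-ones vector on $K$. For $E\subseteq K$ and $c\in C$, $\chi_{E,c}\in\mathbb N^{K\cup C}$ has $K$-components $\chi_E$ and $C$-components equal to the indicator of $c$. $PM(V)=\{\chi_{q,c}: c\in C,\ q\text{ a perfect matching of }B_c\}$. For $\mathcal M\subseteq\mathbb N^{K\cup C}$, $\mathbf N(\mathcal M)$ is the set of finite nonnegative integer combinations of elements of $\mathcal M$, and $\overline{\mathbf N}(\mathcal M)=\{v\in\mathbb N^{K\cup C}: kv\in\mathbf N(\mathcal M)\text{ for some integer }k\ge1\}$. For $v\in\mathbb N^{K\cup C}$, $E(v)=\{e\in K: v(e)=1\}$. $\mathrm{problem}(V)$ is the set of $v\in\mathbb N^{K\cup C}$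 such that $v|_K\le\chi_K$, the graph $(V,E(v))$ is regular, and $\frac{|V|}{2}\sum_{c\in C}v(c)=\sum_{e\in K}v(e)$. A regular graph $G=(V,E)$ is B-factorizable if every $v\in\overline{\mathbf N}(PM(V))$ with $v|_K=\chi_E$ belongs to $\mathbf N(PM(V))$. The monoid $\overline{\mathbf N}(PM(V))$ is pointed, hence has a unique inclusion-minimal generating set (as a monoid), its Hilbert basis. An additional generator is an element of the Hilbert basis of $\overline{\mathbf N}(PM(V))$ that does not belong to $PM(V)$. *)

theory Defs
  imports Main
begin

text \<open>Vectors in N^(K \<union> C): coordinates are indexed by the sum type; Inl e for an
  edge e \<in> K, Inr c for an equal partition c \<in> C (c = {H, A} as an unordered pair).\<close>

type_synonym 'a vect = "('a set + 'a set set) \<Rightarrow> nat"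

definition Kset :: "'a set \<Rightarrow> 'a set set" where
  "Kset V = {e. e \<subseteq> V \<and> card e = 2}"

definition Cset :: "'a set \<Rightarrow> 'a set set set" where
  "Cset V = {{H, A} | H A. H \<inter> A = {} \<and> H \<union> A = V
              \<and> card H = card V div 2 \<and> card A = card V div 2}"

definition vecs :: "'a set \<Rightarrow> 'a vect set" where
  "vecs V = {v. \<forall>x. x \<notin> Inl ` Kset V \<union> Inr ` Cset V \<longrightarrow> v x = 0}"

definition chiEc :: "'a set set \<Rightarrow> 'a set set \<Rightarrow> 'a vect" where
  "chiEc E c = (\<lambda>x. case x of Inl e \<Rightarrow> (if e \<in> E then 1 else 0)
                             | Inr d \<Rightarrow> (if d = c then 1 else 0))"

definition B_edges :: "'a set set \<Rightarrow> 'a set set" where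
  "B_edges c = {{h, a} | h a. \<exists>H A. c = {H, A} \<and> h \<in> H \<and> a \<in> A}"

definition perfect_matching :: "'a set \<Rightarrow> 'a set set \<Rightarrow> 'a set set \<Rightarrow> bool" where
  "perfect_matching V F q \<longleftrightarrow> q \<subseteq> F \<and> (\<forall>u\<in>V. \<exists>!e. e \<in> q \<and> u \<in> e)"

definition PM :: "'a set \<Rightarrow> 'a vect set" where
  "PM V = {chiEc q c | c q. c \<in> Cset V \<and> perfect_matching V (B_edges c) q}"

inductive_set Ncomb :: "'a vect set \<Rightarrow> 'a vect set" for M where
  zero: "(\<lambda>_. 0) \<in> Ncomb M"
| add: "x \<in> M \<Longrightarrow> y \<in> Ncomb M \<Longrightarrow> (\<lambda>i. x i + y i) \<in> Ncomb M"

definition Nbar :: "'a set \<Rightarrow> 'a vect set \<Rightarrow> 'a vect set" where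
  "Nbar V M = {v \<in> vecs V. \<exists>k::nat. k \<ge> 1 \<and> (\<lambda>i. k * v i) \<in> Ncomb M}"

definition Eset :: "'a set \<Rightarrow> 'a vect \<Rightarrow> 'a set set" where
  "Eset V v = {e \<in> Kset V. v (Inl e) = 1}"

definition regular_graph :: "'a set \<Rightarrow> 'a set set \<Rightarrow> bool" where
  "regular_graph V E \<longleftrightarrow> (\<exists>d. \<forall>u\<in>V. card {e \<in> E. u \<in> e} = d)"

definition problem :: "'a set \<Rightarrow> 'a vect set" where
  "problem V = {v \<in> vecs V. (\<forall>e\<in>Kset V. v (Inl e) \<le> 1)
      \<and> regular_graph V (Eset V v)
      \<and> (card V div 2) * (\<Sum>c\<in>Cset V. v (Inr c)) = (\<Sum>e\<in>Kset V. v (Inl e))}"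

definition B_factorizable :: "'a set \<Rightarrow> 'a set set \<Rightarrow> bool" where
  "B_factorizable V E \<longleftrightarrow>
     (\<forall>v \<in> Nbar V (PM V). (\<forall>e\<in>Kset V. v (Inl e) = (if e \<in> E then 1 else 0))
        \<longrightarrow> v \<in> Ncomb (PM V))"

definition min_generating_set :: "'a vect set \<Rightarrow> 'a vect set \<Rightarrow> bool" where
  "min_generating_set M H \<longleftrightarrow> H \<subseteq> M \<and> Ncomb H = M \<and> (\<forall>H'. H' \<subset> H \<longrightarrow> Ncomb H' \<noteq> M)"

text \<open>v is an element of the Hilbert basis (the unique inclusion-minimal generating set)
  of Nbar(PM V), and not in PM V.\<close>
definition additional_generator :: "'a set \<Rightarrow> 'a vect \<Rightarrow> bool" where
  "additional_generator V v \<longleftrightarrow>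
     (\<exists>H. min_generating_set (Nbar V (PM V)) H)
     \<and> (\<forall>H. min_generating_set (Nbar V (PM V)) H \<longrightarrow> v \<in> H)
     \<and> v \<notin> PM V"

text \<open>Petersen graph as the Kneser graph K(5,2).\<close>
definition petersenV :: "nat set set" where
  "petersenV = {S. S \<subseteq> {0..<5} \<and> card S = 2}"

definition petersenE :: "nat set set set" where
  "petersenE = {{S, T} | S T. S \<in> petersenV \<and> T \<in> petersenV \<and> S \<inter> T = {}}"

end

theory Submission
  imports Defs
begin

(* Let v = chi_P + chi_{c1} + chi_{c2} + chi_{c3} for three distinct equal partitions
   c1, c2, c3 of the vertex set, each admitting two perfect matchings of B_ci that lie in P
   (six perfect matchings of P).  Then 2v is the sum of these six generators,
   so v \<in> Nbar(PM V).  Any two perfect matchings of P share an edge, while a decomposition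
   v = a + b in Nbar(PM V) with a, b nonzero would give two edge-disjoint perfect matchings of
   P.  Hence v is an atom of Nbar(PM V); as it has two nonzero partition coordinates it is not
   in PM V, so it is an additional generator and v \<notin> N(PM V). *)

lemma Ncomb_add:
  "x \<in> Ncomb M \<Longrightarrow> y \<in> Ncomb M \<Longrightarrow> (\<lambda>i. x i + y i) \<in> Ncomb M"
proof (induction x rule: Ncomb.induct)
  case zero
  then show ?case by simp
next
  case (add x z)
  have "(\<lambda>i. x i + (z i + y i)) \<in> Ncomb M"
    using Ncomb.add[OF add.hyps(1) add.IH[OF add.prems]] .
  then show ?case by (simp add: add.assoc)
qed

lemma Ncomb_scale: "x \<in> Ncomb M \<Longrightarrow> (\<lambda>i. n * x i) \<in> Ncomb M"
proof (induction n)
  case 0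
  then show ?case using Ncomb.zero by simp
next
  case (Suc n)
  then show ?case using Ncomb_add[OF Suc.prems Suc.IH[OF Suc.prems]] by simp
qed

lemma Ncomb_least:
  assumes "H \<subseteq> S" "(\<lambda>_. 0) \<in> S" "\<And>a b. a \<in> S \<Longrightarrow> b \<in> S \<Longrightarrow> (\<lambda>i. a i + b i) \<in> S"
  shows "Ncomb H \<subseteq> S"
proof
  fix x assume "x \<in> Ncomb H"
  then show "x \<in> S" by induction (use assms in blast)+
qed

lemma Nbar_zero: "(\<lambda>_. 0) \<in> Nbar V M"
  unfolding Nbar_def vecs_def using Ncomb.zero by force

lemma Nbar_add:
  assumes "a \<in> Nbar V M" "b \<in> Nbar V M"
  shows "(\<lambda>i. a i + b i) \<in> Nbar V M"
proof -
  obtain k where k: "k \<ge> 1" "(\<lambda>i. k * a i) \<in> Ncomb M"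
    using assms(1) by (auto simp: Nbar_def)
  obtain l where l: "l \<ge> 1" "(\<lambda>i. l * b i) \<in> Ncomb M"
    using assms(2) by (auto simp: Nbar_def)
  have "(\<lambda>i. l * (k * a i) + k * (l * b i)) \<in> Ncomb M"
    using Ncomb_add[OF Ncomb_scale[OF k(2)] Ncomb_scale[OF l(2)]] .
  then have "(\<lambda>i. (k * l) * (a i + b i)) \<in> Ncomb M"
    by (simp add: algebra_simps)
  moreover have "k * l \<ge> 1" using k l by simp
  ultimately show ?thesis
    using assms unfolding Nbar_def vecs_def by (auto intro!: exI[of _ "k * l"])
qed

lemma Ncomb_subset_Nbar: "H \<subseteq> Nbar V M \<Longrightarrow> Ncomb H \<subseteq> Nbar V M"
  by (rule Ncomb_least) (simp_all add: Nbar_zero Nbar_add)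

(* A nonzero element of Nbar(M) has the support of some generator in M inside its own
   support: a positive multiple of it is a nonempty sum of generators. *)
lemma Nbar_dominates_generator:
  assumes "a \<in> Nbar V M" "a \<noteq> (\<lambda>_. 0)"
  shows "\<exists>x\<in>M. \<forall>i. 0 < x i \<longrightarrow> 0 < a i"
proof -
  obtain k where k: "k \<ge> 1" "(\<lambda>i. k * a i) \<in> Ncomb M"
    using assms(1) by (auto simp: Nbar_def)
  from k(2) have "\<exists>x\<in>M. \<forall>i. 0 < x i \<longrightarrow> 0 < k * a i"
  proof cases
    case zero
    then show ?thesis using assms(2) k(1) by (metis mult_eq_0_iff not_one_le_zero)
  next
    case (add x y)
    then show ?thesis by (metis add_gr_0)
  qed
  then show ?thesis by auto
qed

(* The atoms (irreducible elements) of a monoid S of vectors: nonzero elements that admit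
   no decomposition into two nonzero summands of S.  For Nbar(PM V) these form the Hilbert basis. *)
definition atoms :: "'a vect set \<Rightarrow> 'a vect set" where
  "atoms S = {x \<in> S. x \<noteq> (\<lambda>_. 0)
      \<and> (\<forall>a\<in>S. \<forall>b\<in>S. x = (\<lambda>i. a i + b i) \<longrightarrow> a = (\<lambda>_. 0) \<or> b = (\<lambda>_. 0))}"

lemma atom_in_generating_set:
  assumes "H \<subseteq> S" "Ncomb H \<subseteq> S"
  shows "x \<in> Ncomb H \<Longrightarrow> x \<in> atoms S \<Longrightarrow> x \<in> H"
proof (induction x rule: Ncomb.induct)
  case zero
  then show ?case by (simp add: atoms_def)
next
  case (add h y)
  have "h \<in> S" "y \<in> S" using add.hyps assms by blast+
  then have "h = (\<lambda>_. 0) \<or> y = (\<lambda>_. 0)" using add.prems unfolding atoms_def by blast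
  then show ?case using add by auto
qed

lemma finite_Kset: "finite V \<Longrightarrow> finite (Kset V)"
  by (rule finite_subset[of _ "Pow V"]) (auto simp: Kset_def)

lemma finite_Cset: "finite V \<Longrightarrow> finite (Cset V)"
proof (rule finite_subset[of _ "Pow (Pow V)"])
  show "Cset V \<subseteq> Pow (Pow V)" unfolding Cset_def by blast
qed simp

(* For finite V only finitely many coordinates K \<union> C are relevant, so the total mass of a
   vector is a natural number that vanishes only at 0; splitting off a nonzero summand
   strictly decreases it. *)
definition mass :: "'a set \<Rightarrow> 'a vect \<Rightarrow> nat" where
  "mass V x = (\<Sum>i \<in> Inl ` Kset V \<union> Inr ` Cset V. x i)"

lemma mass_add: "mass V (\<lambda>i. a i + b i) = mass V a + mass V b"
  by (simp add: mass_def sum.distrib)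

lemma sum_eq_0_iff_vanishing_outside:
  fixes x :: "'i \<Rightarrow> nat"
  assumes "finite I" "\<And>i. i \<notin> I \<Longrightarrow> x i = 0"
  shows "(\<Sum>i\<in>I. x i) = 0 \<longleftrightarrow> x = (\<lambda>_. 0)"
  using assms by (auto simp: sum_eq_0_iff)

lemma mass_eq_0_iff:
  assumes "finite V" "x \<in> vecs V"
  shows "mass V x = 0 \<longleftrightarrow> x = (\<lambda>_. 0)"
  unfolding mass_def
proof (rule sum_eq_0_iff_vanishing_outside)
  show "finite (Inl ` Kset V \<union> Inr ` Cset V)"
    using finite_Kset[OF assms(1)] finite_Cset[OF assms(1)] by blast
qed (use assms(2) in \<open>simp add: vecs_def\<close>)

lemma Nbar_generated_by_atoms:
  assumes "finite V"
  shows "x \<in> Nbar V M \<Longrightarrow> x \<in> Ncomb (atoms (Nbar V M))"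
proof (induction "mass V x" arbitrary: x rule: less_induct)
  case less
  show ?case
  proof (cases "x = (\<lambda>_. 0) \<or> x \<in> atoms (Nbar V M)")
    case True
    then show ?thesis using Ncomb.zero Ncomb.add[OF _ Ncomb.zero] by fastforce
  next
    case False
    then obtain a b where ab: "a \<in> Nbar V M" "b \<in> Nbar V M" "x = (\<lambda>i. a i + b i)"
        "a \<noteq> (\<lambda>_. 0)" "b \<noteq> (\<lambda>_. 0)"
      using less.prems unfolding atoms_def by blast
    have "mass V a \<noteq> 0" "mass V b \<noteq> 0"
      using ab mass_eq_0_iff[OF assms] by (auto simp: Nbar_def)
    then have "mass V a < mass V x" "mass V b < mass V x"
      by (simp_all add: ab(3) mass_add)
    then show ?thesis using less.hyps ab Ncomb_add by blast
  qed
qed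

lemma atoms_min_generating_set:
  assumes "finite V"
  shows "min_generating_set (Nbar V M) (atoms (Nbar V M))"
proof -
  have sub: "atoms (Nbar V M) \<subseteq> Nbar V M" by (auto simp: atoms_def)
  have gen: "Ncomb (atoms (Nbar V M)) = Nbar V M"
    using Ncomb_subset_Nbar[OF sub] Nbar_generated_by_atoms[OF assms] by blast
  have "Ncomb H \<noteq> Nbar V M" if psub: "H \<subset> atoms (Nbar V M)" for H
  proof
    assume "Ncomb H = Nbar V M"
    moreover obtain x where "x \<in> atoms (Nbar V M)" "x \<notin> H"
      using psubset_imp_ex_mem[OF psub] by blast
    ultimately show False
      using atom_in_generating_set[of H "Nbar V M" x] psub sub by blast
  qed
  then show ?thesis using sub gen by (simp add: min_generating_set_def)
qed

lemma atoms_in_min_generating_set: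
  assumes "min_generating_set S H" "x \<in> atoms S"
  shows "x \<in> H"
proof -
  have "H \<subseteq> S" "Ncomb H = S" "x \<in> S"
    using assms by (auto simp: min_generating_set_def atoms_def)
  then show "x \<in> H" using atom_in_generating_set assms(2) by blast
qed

lemma additional_generatorI:
  "finite V \<Longrightarrow> v \<in> atoms (Nbar V (PM V)) \<Longrightarrow> v \<notin> PM V \<Longrightarrow> additional_generator V v"
  unfolding additional_generator_def
  by (meson atoms_min_generating_set atoms_in_min_generating_set)

lemma chiEc_Inl [simp]: "chiEc q c (Inl e) = (if e \<in> q then 1 else 0)"
  by (simp add: chiEc_def)

lemma chiEc_Inr [simp]: "chiEc q c (Inr d) = (if d = c then 1 else 0)"
  by (simp add: chiEc_def)

lemma B_edges_subset_Kset:
  assumes "c \<in> Cset V"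
  shows "B_edges c \<subseteq> Kset V"
proof
  fix e assume "e \<in> B_edges c"
  then obtain h a H A where e: "e = {h, a}" "c = {H, A}" "h \<in> H" "a \<in> A"
    unfolding B_edges_def by blast
  obtain H' A' where c: "c = {H', A'}" "H' \<inter> A' = {}" "H' \<union> A' = V"
    using assms unfolding Cset_def by blast
  from c(1) e(2) have "(H = H' \<and> A = A') \<or> (H = A' \<and> A = H')"
    by (simp add: doubleton_eq_iff)
  then have "H \<inter> A = {}" "H \<union> A = V" using c(2,3) by blast+
  with e have "h \<noteq> a" "h \<in> V" "a \<in> V" by blast+
  with e(1) show "e \<in> Kset V" unfolding Kset_def by simp
qed

lemma PM_subset_vecs: "PM V \<subseteq> vecs V"
proof
  fix x assume "x \<in> PM V"
  then obtain c q where x: "x = chiEc q c" "c \<in> Cset V" "q \<subseteq> B_edges c"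
    unfolding PM_def perfect_matching_def by blast
  with B_edges_subset_Kset have "q \<subseteq> Kset V" by blast
  then show "x \<in> vecs V"
    unfolding vecs_def using x by (auto simp: chiEc_def split: sum.split)
qed

lemma PM_subset_Nbar: "PM V \<subseteq> Nbar V (PM V)"
proof
  fix x assume x: "x \<in> PM V"
  then have "(\<lambda>i. 1 * x i) \<in> Ncomb (PM V)"
    using Ncomb.add[OF x Ncomb.zero] by simp
  then show "x \<in> Nbar V (PM V)"
    using x PM_subset_vecs unfolding Nbar_def by blast
qed

lemma PM_single_partition:
  assumes "x \<in> PM V" "x (Inr c1) \<noteq> 0" "x (Inr c2) \<noteq> 0"
  shows "c1 = c2"
  using assms unfolding PM_def by (auto split: if_splits)

lemma matching_below:
  assumes "w \<in> Nbar V (PM V)" "w \<noteq> (\<lambda>_. 0)"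
    and "\<And>e. 0 < w (Inl e) \<Longrightarrow> e \<in> E"
  obtains q where "perfect_matching V E q" "\<And>e. e \<in> q \<Longrightarrow> 0 < w (Inl e)"
proof -
  obtain x where x: "x \<in> PM V" "\<forall>i. 0 < x i \<longrightarrow> 0 < w i"
    using Nbar_dominates_generator[OF assms(1,2)] by blast
  then obtain c q where q: "x = chiEc q c" "perfect_matching V (B_edges c) q"
    unfolding PM_def by blast
  have pos: "0 < w (Inl e)" if "e \<in> q" for e
  proof -
    have "0 < x (Inl e)" using q(1) that by simp
    then show ?thesis using x(2) by blast
  qed
  then have "q \<subseteq> E" using assms(3) by blast
  then have "perfect_matching V E q"
    using q(2) unfolding perfect_matching_def by blast
  with pos show thesis using that by blast
qed

(* In a decomposition v = a + b with
   a, b nonzero the supports of a and b would contain perfect matchings of (V, E), which are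
   edge-disjoint because v is 0/1 on the edges. *)
lemma atom_if_matchings_meet:
  assumes meet: "\<And>q q'. perfect_matching V E q \<Longrightarrow> perfect_matching V E q' \<Longrightarrow> q \<inter> q' \<noteq> {}"
    and v: "v \<in> Nbar V (PM V)" "v \<noteq> (\<lambda>_. 0)"
    and edges: "\<And>e. v (Inl e) = (if e \<in> E then 1 else 0)"
  shows "v \<in> atoms (Nbar V (PM V))"
  unfolding atoms_def
proof (intro CollectI conjI ballI impI v)
  fix a b assume ab: "a \<in> Nbar V (PM V)" "b \<in> Nbar V (PM V)" "v = (\<lambda>i. a i + b i)"
  have sum: "a (Inl e) + b (Inl e) = (if e \<in> E then 1 else 0)" for e
    using edges[of e] ab(3) by simp
  show "a = (\<lambda>_. 0) \<or> b = (\<lambda>_. 0)"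
  proof (rule ccontr)
    assume "\<not> (a = (\<lambda>_. 0) \<or> b = (\<lambda>_. 0))"
    moreover have "e \<in> E" if "0 < a (Inl e) \<or> 0 < b (Inl e)" for e
      using sum[of e] that by (auto split: if_splits)
    ultimately obtain q q' where
      "perfect_matching V E q" "\<And>e. e \<in> q \<Longrightarrow> 0 < a (Inl e)"
      "perfect_matching V E q'" "\<And>e. e \<in> q' \<Longrightarrow> 0 < b (Inl e)"
      using matching_below[OF ab(1)] matching_below[OF ab(2)] by metis
    moreover obtain e where "e \<in> q" "e \<in> q'"
      using meet calculation by blast
    ultimately have "0 < a (Inl e)" "0 < b (Inl e)" by blast+
    then show False using sum[of e] by (simp split: if_splits)
  qed
qed

lemma obstruction_from_meeting_matchings:
  assumes "finite V"
    and meet: "\<And>q q'. perfect_matching V E q \<Longrightarrow> perfect_matching V E q' \<Longrightarrow> q \<inter> q' \<noteq> {}"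
    and v: "v \<in> Nbar V (PM V)"
    and edges: "\<And>e. v (Inl e) = (if e \<in> E then 1 else 0)"
    and parts: "c1 \<noteq> c2" "v (Inr c1) \<noteq> 0" "v (Inr c2) \<noteq> 0"
  shows "\<not> B_factorizable V E \<and> additional_generator V v"
proof
  have "v \<noteq> (\<lambda>_. 0)" using parts by auto
  then have atom: "v \<in> atoms (Nbar V (PM V))"
    using atom_if_matchings_meet[OF meet v _ edges] by blast
  have notPM: "v \<notin> PM V" using PM_single_partition parts by blast
  have "v \<notin> Ncomb (PM V)"
    using atom_in_generating_set[OF PM_subset_Nbar Ncomb_subset_Nbar[OF PM_subset_Nbar]] atom notPM
    by blast
  then show "\<not> B_factorizable V E"
    unfolding B_factorizable_def using v edges by blast
  show "additional_generator V v"
    using additional_generatorI[OF assms(1) atom notPM] .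
qed

definition star :: "'a set \<Rightarrow> 'a set set \<Rightarrow> 'a \<Rightarrow> 'a set \<Rightarrow> 'a set \<Rightarrow> 'a set \<Rightarrow> bool" where
  "star V E u a b c \<longleftrightarrow> u \<in> V \<and> {e \<in> E. u \<in> e} = {a, b, c} \<and> a \<noteq> b \<and> a \<noteq> c \<and> b \<noteq> c"

lemma starI:
  assumes "u \<in> V" "a \<in> E" "b \<in> E" "c \<in> E" "u \<in> a" "u \<in> b" "u \<in> c"
    and "\<forall>e\<in>E. u \<in> e \<longrightarrow> e = a \<or> e = b \<or> e = c"
    and "a \<noteq> b" "a \<noteq> c" "b \<noteq> c"
  shows "star V E u a b c"
  using assms unfolding star_def by blast

lemma star_degree: "star V E u a b c \<Longrightarrow> card {e \<in> E. u \<in> e} = 3"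
  by (simp add: star_def)

lemma star_matching:
  assumes "star V E u a b c" "perfect_matching V E q"
  shows "(a \<in> q \<and> b \<notin> q \<and> c \<notin> q) \<or> (a \<notin> q \<and> b \<in> q \<and> c \<notin> q) \<or> (a \<notin> q \<and> b \<notin> q \<and> c \<in> q)"
proof -
  have at_u: "{e \<in> E. u \<in> e} = {a, b, c}" and distinct: "a \<noteq> b" "a \<noteq> c" "b \<noteq> c"
    using assms(1) unfolding star_def by blast+
  have "u \<in> V" "q \<subseteq> E" using assms unfolding star_def perfect_matching_def by blast+
  then obtain e where e: "e \<in> q" "u \<in> e" and only: "\<And>e'. e' \<in> q \<Longrightarrow> u \<in> e' \<Longrightarrow> e' = e"
    using assms(2) unfolding perfect_matching_def by metis
  have "x \<in> q \<longleftrightarrow> x = e" if "x \<in> {a, b, c}" for x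
    using that at_u e only by blast
  moreover have "e \<in> {a, b, c}" using at_u e \<open>q \<subseteq> E\<close> by blast
  ultimately show ?thesis using distinct by auto
qed

lemma perfect_matchingI:
  assumes "q \<subseteq> F" "\<Union>q = V" "\<forall>e\<in>q. \<forall>e'\<in>q. e \<noteq> e' \<longrightarrow> e \<inter> e' = {}"
  shows "perfect_matching V F q"
  unfolding perfect_matching_def
proof (intro conjI ballI assms(1))
  fix u assume "u \<in> V"
  then obtain e where "e \<in> q" "u \<in> e" using assms(2) by blast
  moreover have "e' = e" if "e' \<in> q" "u \<in> e'" for e'
    using assms(3) that calculation by blast
  ultimately show "\<exists>!e. e \<in> q \<and> u \<in> e" by blast
qed

lemma B_edgesI: "h \<in> H \<Longrightarrow> a \<in> A \<Longrightarrow> {h, a} \<in> B_edges {H, A}"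
  unfolding B_edges_def by blast

lemma CsetI:
  "H \<inter> A = {} \<Longrightarrow> H \<union> A = V \<Longrightarrow> card H = card V div 2 \<Longrightarrow> card A = card V div 2
    \<Longrightarrow> {H, A} \<in> Cset V"
  unfolding Cset_def by blast

lemma partition_neqI: "x \<in> H \<Longrightarrow> x \<notin> H' \<Longrightarrow> y \<in> H \<Longrightarrow> y \<notin> A' \<Longrightarrow> {H, A} \<noteq> {H', A'}"
  by blast

lemma sum_indicator_eq_card:
  assumes "finite A" "B \<subseteq> A"
  shows "(\<Sum>x\<in>A. if x \<in> B then 1 else 0 :: nat) = card B"
proof -
  have "(\<Sum>x\<in>A. if x \<in> B then 1 else 0 :: nat) = (\<Sum>x\<in>A \<inter> B. 1)"
    using sum.If_cases[OF assms(1), of "\<lambda>x. x \<in> B" "\<lambda>_. 1 :: nat" "\<lambda>_. 0"] by simp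
  also have "A \<inter> B = B" using assms(2) by blast
  finally show ?thesis by simp
qed

lemma petersenV_explicit:
  "petersenV = {{0,1},{0,2},{0,3},{0,4},{1,2},{1,3},{1,4},{2,3},{2,4},{3,4}}"
proof
  show "petersenV \<subseteq> {{0,1},{0,2},{0,3},{0,4},{1,2},{1,3},{1,4},{2,3},{2,4},{3,4}}"
  proof
    fix S assume "S \<in> petersenV"
    then have S: "S \<subseteq> {0..<5}" "card S = 2" by (auto simp: petersenV_def)
    then obtain x y where xy: "S = {x, y}" "x \<noteq> y" by (meson card_2_iff)
    with S have "x < 5" "y < 5" by auto
    then have "x \<in> {0,1,2,3,4}" "y \<in> {0,1,2,3,4}" by auto
    with xy show "S \<in> {{0,1},{0,2},{0,3},{0,4},{1,2},{1,3},{1,4},{2,3},{2,4},{3,4}}"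
      by (auto simp: doubleton_eq_iff)
  qed
qed (auto simp: petersenV_def)

lemma petersenE_explicit:
  "petersenE = {{{0,1},{2,3}},{{0,1},{2,4}},{{0,1},{3,4}},
                {{0,2},{1,3}},{{0,2},{1,4}},{{0,2},{3,4}},
                {{0,3},{1,2}},{{0,3},{1,4}},{{0,3},{2,4}},
                {{0,4},{1,2}},{{0,4},{1,3}},{{0,4},{2,3}},
                {{1,2},{3,4}},{{1,3},{2,4}},{{1,4},{2,3}}}"
    (is "_ = ?E")
proof
  show "petersenE \<subseteq> ?E"
  proof
    fix e assume "e \<in> petersenE"
    then obtain S T where e: "e = {S, T}" "S \<in> petersenV" "T \<in> petersenV" "S \<inter> T = {}"
      by (auto simp: petersenE_def)
    then show "e \<in> ?E" unfolding petersenV_explicit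
      by (simp only: insert_iff empty_iff) (elim disjE; simp add: doubleton_eq_iff)
  qed
  have edge: "{S, T} \<in> petersenE" if "S \<in> petersenV" "T \<in> petersenV" "S \<inter> T = {}" for S T
    using that unfolding petersenE_def by blast
  show "?E \<subseteq> petersenE"
    by (simp only: insert_subset empty_subsetI simp_thms)
      (intro conjI; rule edge; simp add: petersenV_explicit)
qed

lemma petersen_stars:
  "star petersenV petersenE {0,1} {{0,1},{2,3}} {{0,1},{2,4}} {{0,1},{3,4}}"
  "star petersenV petersenE {0,2} {{0,2},{1,3}} {{0,2},{1,4}} {{0,2},{3,4}}"
  "star petersenV petersenE {0,3} {{0,3},{1,2}} {{0,3},{1,4}} {{0,3},{2,4}}"
  "star petersenV petersenE {0,4} {{0,4},{1,2}} {{0,4},{1,3}} {{0,4},{2,3}}"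
  "star petersenV petersenE {1,2} {{0,3},{1,2}} {{0,4},{1,2}} {{1,2},{3,4}}"
  "star petersenV petersenE {1,3} {{0,2},{1,3}} {{0,4},{1,3}} {{1,3},{2,4}}"
  "star petersenV petersenE {1,4} {{0,2},{1,4}} {{0,3},{1,4}} {{1,4},{2,3}}"
  "star petersenV petersenE {2,3} {{0,1},{2,3}} {{0,4},{2,3}} {{1,4},{2,3}}"
  "star petersenV petersenE {2,4} {{0,1},{2,4}} {{0,3},{2,4}} {{1,3},{2,4}}"
  "star petersenV petersenE {3,4} {{0,1},{3,4}} {{0,2},{3,4}} {{1,2},{3,4}}"
  by (rule starI; simp add: petersenV_explicit petersenE_explicit doubleton_eq_iff)+

lemma petersen_regular: "regular_graph petersenV petersenE"
  unfolding regular_graph_def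
proof (intro exI ballI)
  fix u assume "u \<in> petersenV"
  then show "card {e \<in> petersenE. u \<in> e} = 3"
    unfolding petersenV_explicit
    by (simp only: insert_iff empty_iff) (elim disjE; simp only: petersen_stars[THEN star_degree])
qed

(* Each matching picks
   exactly one of the three edges at every vertex; that two such choices are edge-disjoint
   is an unsatisfiable propositional constraint system, refuted by SMT. *)
lemma petersen_matchings_meet:
  assumes "perfect_matching petersenV petersenE q" "perfect_matching petersenV petersenE q'"
  shows "q \<inter> q' \<noteq> {}"
proof
  assume "q \<inter> q' = {}"
  then have disjoint: "\<not> (e \<in> q \<and> e \<in> q')" for e by blast
  note at_q = petersen_stars[THEN star_matching, OF assms(1)]
   and at_q' = petersen_stars[THEN star_matching, OF assms(2)]
  show False using at_q at_q' disjoint by smt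
qed

lemma petersenE_subset_Kset: "petersenE \<subseteq> Kset petersenV"
proof
  fix e assume "e \<in> petersenE"
  then obtain S T where e: "e = {S, T}" "S \<in> petersenV" "T \<in> petersenV" "S \<inter> T = {}"
    unfolding petersenE_def by blast
  then have "S \<noteq> T" by (auto simp: petersenV_def)
  with e show "e \<in> Kset petersenV" by (simp add: Kset_def)
qed

definition cut1 :: "nat set set set" where
  "cut1 = {{{0,1},{0,2},{0,3},{1,2},{1,3}}, {{0,4},{1,4},{2,3},{2,4},{3,4}}}"

definition cut2 :: "nat set set set" where
  "cut2 = {{{0,1},{0,2},{0,4},{1,2},{1,4}}, {{0,3},{1,3},{2,3},{2,4},{3,4}}}"

definition cut3 :: "nat set set set" where
  "cut3 = {{{0,1},{0,2},{1,2},{2,3},{2,4}}, {{0,3},{0,4},{1,3},{1,4},{3,4}}}"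

lemma card_petersenV: "card petersenV = 10"
  by (simp add: petersenV_explicit doubleton_eq_iff)

lemma petersen_cuts: "cut1 \<in> Cset petersenV" "cut2 \<in> Cset petersenV" "cut3 \<in> Cset petersenV"
  unfolding cut1_def cut2_def cut3_def
  by (rule CsetI; simp add: card_petersenV petersenV_explicit doubleton_eq_iff insert_commute)+

lemma petersen_cuts_distinct: "cut1 \<noteq> cut2" "cut1 \<noteq> cut3" "cut2 \<noteq> cut3"
proof -
  show "cut1 \<noteq> cut2" unfolding cut1_def cut2_def
    by (rule partition_neqI[of "{0,3}" _ _ "{0,1}"]) (simp_all add: doubleton_eq_iff)
  show "cut1 \<noteq> cut3" unfolding cut1_def cut3_def
    by (rule partition_neqI[of "{0,3}" _ _ "{0,1}"]) (simp_all add: doubleton_eq_iff)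
  show "cut2 \<noteq> cut3" unfolding cut2_def cut3_def
    by (rule partition_neqI[of "{0,4}" _ _ "{0,1}"]) (simp_all add: doubleton_eq_iff)
qed

definition m1a :: "nat set set set" where
  "m1a = {{{0,1},{2,3}},{{0,2},{1,4}},{{0,3},{2,4}},{{1,3},{0,4}},{{1,2},{3,4}}}"

definition m1b :: "nat set set set" where
  "m1b = {{{0,1},{2,3}},{{0,2},{3,4}},{{0,3},{1,4}},{{1,2},{0,4}},{{1,3},{2,4}}}"

definition m2a :: "nat set set set" where
  "m2a = {{{0,1},{2,4}},{{0,2},{1,3}},{{1,4},{0,3}},{{0,4},{2,3}},{{1,2},{3,4}}}"

definition m2b :: "nat set set set" where
  "m2b = {{{0,1},{2,4}},{{0,2},{3,4}},{{1,2},{0,3}},{{0,4},{1,3}},{{1,4},{2,3}}}"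

definition m3a :: "nat set set set" where
  "m3a = {{{0,1},{3,4}},{{0,2},{1,3}},{{2,4},{0,3}},{{1,2},{0,4}},{{2,3},{1,4}}}"

definition m3b :: "nat set set set" where
  "m3b = {{{0,1},{3,4}},{{0,2},{1,4}},{{1,2},{0,3}},{{2,3},{0,4}},{{2,4},{1,3}}}"

lemma petersen_cut_matchings:
  "perfect_matching petersenV (B_edges cut1) m1a" "perfect_matching petersenV (B_edges cut1) m1b"
  "perfect_matching petersenV (B_edges cut2) m2a" "perfect_matching petersenV (B_edges cut2) m2b"
  "perfect_matching petersenV (B_edges cut3) m3a" "perfect_matching petersenV (B_edges cut3) m3b"
  unfolding m1a_def m1b_def m2a_def m2b_def m3a_def m3b_def cut1_def cut2_def cut3_def
  by (rule perfect_matchingI,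
      (simp only: insert_subset empty_subsetI simp_thms, intro conjI; rule B_edgesI; simp),
      simp add: petersenV_explicit insert_commute,
      simp add: doubleton_eq_iff)+

definition petersen_vector :: "nat set vect" where
  "petersen_vector = (\<lambda>i. case i of
      Inl e \<Rightarrow> if e \<in> petersenE then 1 else 0
    | Inr c \<Rightarrow> if c \<in> {cut1, cut2, cut3} then 1 else 0)"

lemma petersen_vector_Inl [simp]: "petersen_vector (Inl e) = (if e \<in> petersenE then 1 else 0)"
  by (simp add: petersen_vector_def)

lemma petersen_vector_Inr [simp]: "petersen_vector (Inr c) = (if c \<in> {cut1, cut2, cut3} then 1 else 0)"
  by (simp add: petersen_vector_def)

lemma cut_matchings_in_petersen: "m1a \<union> m1b \<union> m2a \<union> m2b \<union> m3a \<union> m3b \<subseteq> petersenE"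
  unfolding m1a_def m1b_def m2a_def m2b_def m3a_def m3b_def petersenE_explicit
  by (simp add: doubleton_eq_iff)

(* Every Petersen edge lies in exactly two of the six matchings, so 2v is the sum of the
   six generators chi_{mXy, cutX}; in particular v \<in> Nbar(PM V). *)
lemma twice_petersen_vector:
  "(\<lambda>i. 2 * petersen_vector i) = (\<lambda>i. chiEc m1a cut1 i + (chiEc m1b cut1 i + (chiEc m2a cut2 i
     + (chiEc m2b cut2 i + (chiEc m3a cut3 i + (chiEc m3b cut3 i + 0))))))"
proof
  fix i
  show "2 * petersen_vector i = chiEc m1a cut1 i + (chiEc m1b cut1 i + (chiEc m2a cut2 i
     + (chiEc m2b cut2 i + (chiEc m3a cut3 i + (chiEc m3b cut3 i + 0)))))"
  proof (cases i)
    case (Inl e)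
    show ?thesis
    proof (cases "e \<in> petersenE")
      case True
      then show ?thesis unfolding Inl petersenE_explicit
        by (simp only: insert_iff empty_iff)
          (elim disjE; simp add: m1a_def m1b_def m2a_def m2b_def m3a_def m3b_def
            petersenE_explicit doubleton_eq_iff)
    next
      case False
      then show ?thesis using Inl cut_matchings_in_petersen by auto
    qed
  next
    case (Inr c)
    then show ?thesis using petersen_cuts_distinct by auto
  qed
qed

lemma petersen_vector_twice_in_Ncomb: "(\<lambda>i. 2 * petersen_vector i) \<in> Ncomb (PM petersenV)"
  unfolding twice_petersen_vector PM_def
  using petersen_cuts petersen_cut_matchings by (intro Ncomb.add Ncomb.zero; blast)

lemma petersen_vector_vecs: "petersen_vector \<in> vecs petersenV"
  unfolding vecs_def
proof (intro CollectI allI impI)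
  fix i assume "i \<notin> Inl ` Kset petersenV \<union> Inr ` Cset petersenV"
  then show "petersen_vector i = 0"
    using petersenE_subset_Kset petersen_cuts by (cases i) auto
qed

lemma petersen_vector_Nbar: "petersen_vector \<in> Nbar petersenV (PM petersenV)"
  unfolding Nbar_def
  using petersen_vector_vecs petersen_vector_twice_in_Ncomb by (intro CollectI conjI exI[of _ 2]) auto

lemma Eset_petersen_vector: "Eset petersenV petersen_vector = petersenE"
  using petersenE_subset_Kset by (auto simp: Eset_def)

(* v satisfies the defining conditions of problem(V): 5 * 3 = 15. *)
lemma petersen_vector_problem: "petersen_vector \<in> problem petersenV"
  unfolding problem_def
proof (intro CollectI conjI petersen_vector_vecs)
  show "\<forall>e\<in>Kset petersenV. petersen_vector (Inl e) \<le> 1" by simp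
  show "regular_graph petersenV (Eset petersenV petersen_vector)"
    using petersen_regular by (simp add: Eset_petersen_vector)
  have fin: "finite petersenV" by (simp add: petersenV_explicit)
  have "{cut1, cut2, cut3} \<subseteq> Cset petersenV" using petersen_cuts by simp
  then have "(\<Sum>c\<in>Cset petersenV. petersen_vector (Inr c)) = card {cut1, cut2, cut3}"
    unfolding petersen_vector_Inr by (rule sum_indicator_eq_card[OF finite_Cset[OF fin]])
  also have "\<dots> = 3" using petersen_cuts_distinct by simp
  finally have cuts: "(\<Sum>c\<in>Cset petersenV. petersen_vector (Inr c)) = 3" .
  have "(\<Sum>e\<in>Kset petersenV. petersen_vector (Inl e)) = card petersenE"
    unfolding petersen_vector_Inl
    by (rule sum_indicator_eq_card[OF finite_Kset[OF fin] petersenE_subset_Kset])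
  also have "\<dots> = 15" by (simp add: petersenE_explicit doubleton_eq_iff)
  finally have edges: "(\<Sum>e\<in>Kset petersenV. petersen_vector (Inl e)) = 15" .
  show "card petersenV div 2 * (\<Sum>c\<in>Cset petersenV. petersen_vector (Inr c))
      = (\<Sum>e\<in>Kset petersenV. petersen_vector (Inl e))"
    unfolding cuts edges card_petersenV by simp
qed

theorem mainTheorem13:
  shows "\<not> B_factorizable petersenV petersenE
    \<and> (\<exists>v. v \<in> Nbar petersenV (PM petersenV) \<and> v \<in> problem petersenV
          \<and> Eset petersenV v = petersenE
          \<and> (\<lambda>i. 2 * v i) \<in> Ncomb (PM petersenV)
          \<and> additional_generator petersenV v)"
proof -
  have "\<not> B_factorizable petersenV petersenE \<and> additional_generator petersenV petersen_vector"
  proof (rule obstruction_from_meeting_matchings)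
    show "finite petersenV" by (simp add: petersenV_explicit)
    show "cut1 \<noteq> cut2" by (rule petersen_cuts_distinct)
  qed (use petersen_matchings_meet petersen_vector_Nbar in auto)
  then show ?thesis
    using petersen_vector_Nbar petersen_vector_problem Eset_petersen_vector
      petersen_vector_twice_in_Ncomb by blast
qed

end
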